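(* Let $\epsilon_1>0$ and let $u$ be a utility function on contexts of sensitivity $\Delta u\le1$ (context population size $|D_C|$ or overlap $|D_C\cap D_{C_V}|$ with a fixed starting context $C_V$, set to $-\infty$ on non-matching contexts). Consider the Uniform Sampling algorithm: starting with an empty multiset $C_M$, repeatedly draw a context $C$ by setting each of its $t$ bits independently to $1$ with probability $1/2$ and to $0$ otherwise, adding $C$ to $C_M$ whenever $f_M(D_C,V)=\mathrm{true}$, as long as $|C_M|\le n$; then output $\mathrm{Exp}^{\epsilon_1}_u(D,C_M)$. Then this algorithm satisfies $(2\epsilon_1,\ COE_M(\cdot,V))$-Output Constrained Differential Privacy.
   Context: Dataset $D$ over categorical attributes $A_1,\dots,A_m$ (domain sizes $|A_i|$, all possible values) and metric attribute $M$; $t=\sum_i|A_i|$. A context is a binary vector of length $t$, $c_{ij}=1$ meaning the $j$-th value of $A_i$ is selected; $D_C$ is the set of tuples of $D$ whose value in every $A_i$ is selected by $C$. $f_M(D_C,V)$ is a deterministic test of whether record $V$ is an outlier in $D_C$ w.r.t. $M$. $COE_M(D,V)$ is the set of contexts $C$ with $V\in D_C$ and $f_M(D_C,V)=\mathrm{true}$. $n$ is the desired number of samples. Sensitivity: $\Delta u=\max|u(D_1,r)-u(D_2,r)|$ over neighboring datasets (differing by adding/removing one record) and outputs $r$. $\mathrm{Exp}^{\epsilon}_u(D,\mathcal R)$ outputs $r\in\mathcal R$ with probability $\exp(\epsilon u(D,r)/(2\Delta u))/\sum_{r'\in\mathcal R}\exp(\epsilon u(D,r')/(2\Delta u))$.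 $D_1,D_2$ are $f$-neighbors if they differ by adding/removing one record and $f(D_1)=f(D_2)\ne\emptyset$; $\mathcal M$ satisfies $(\epsilon,f)$-Output Constrained Differential Privacy if $\Pr[\mathcal M(D_1)\in S]\le e^\epsilon\Pr[\mathcal M(D_2)\in S]$ for all $f$-neighbors $D_1,D_2$ and all output sets $S$. *)

theory Defs
  imports "HOL-Probability.Probability" "HOL-Library.Multiset"
begin

text \<open>Schema: m categorical attributes; attribute i (i < m) has domain
 {0..<d i}.  Records are of an abstract type 'r; val x i is the (index of the)
 value of attribute i in record x.  The metric attribute is part of the
 record and only enters through the outlier test f.\<close>

definition tlen :: "nat \<Rightarrow> (nat \<Rightarrow> nat) \<Rightarrow> nat" where
  "tlen m d = (\<Sum>i<m. d i)"

definition bitpos :: "(nat \<Rightarrow> nat) \<Rightarrow> nat \<Rightarrow> nat \<Rightarrow> nat" where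
  "bitpos d i j = (\<Sum>k<i. d k) + j"

definition contexts :: "nat \<Rightarrow> (nat \<Rightarrow> nat) \<Rightarrow> bool list set" where
  "contexts m d = {c. length c = tlen m d}"

definition restrict_ctx ::
  "nat \<Rightarrow> (nat \<Rightarrow> nat) \<Rightarrow> ('r \<Rightarrow> nat \<Rightarrow> nat) \<Rightarrow> 'r multiset \<Rightarrow> bool list \<Rightarrow> 'r multiset" where
  "restrict_ctx m d val D c = filter_mset (\<lambda>x. \<forall>i<m. c ! bitpos d i (val x i)) D"

definition COE ::
  "nat \<Rightarrow> (nat \<Rightarrow> nat) \<Rightarrow> ('r \<Rightarrow> nat \<Rightarrow> nat) \<Rightarrow> ('r multiset \<Rightarrow> 'r \<Rightarrow> bool)
    \<Rightarrow> 'r multiset \<Rightarrow> 'r \<Rightarrow> bool list set" where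
  "COE m d val f D V = {c \<in> contexts m d. V \<in># restrict_ctx m d val D c \<and> f (restrict_ctx m d val D c) V}"

definition neighbors :: "'r multiset \<Rightarrow> 'r multiset \<Rightarrow> bool" where
  "neighbors D1 D2 \<longleftrightarrow> (\<exists>r. D2 = add_mset r D1 \<or> D1 = add_mset r D2)"

definition f_neighbors :: "('r multiset \<Rightarrow> 'b set) \<Rightarrow> 'r multiset \<Rightarrow> 'r multiset \<Rightarrow> bool" where
  "f_neighbors F D1 D2 \<longleftrightarrow> neighbors D1 D2 \<and> F D1 = F D2 \<and> F D1 \<noteq> {}"

definition OCDP :: "real \<Rightarrow> ('r multiset \<Rightarrow> 'b set) \<Rightarrow> ('r multiset \<Rightarrow> 'o spmf) \<Rightarrow> bool" where
  "OCDP eps F Mech \<longleftrightarrow> (\<forall>D1 D2 S. f_neighbors F D1 D2 \<longrightarrow>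
      measure (measure_spmf (Mech D1)) S \<le> exp eps * measure (measure_spmf (Mech D2)) S)"

fun coins :: "nat \<Rightarrow> bool list spmf" where
  "coins 0 = return_spmf []"
| "coins (Suc k) = bind_spmf coin_spmf (\<lambda>b. map_spmf (Cons b) (coins k))"

partial_function (spmf) us_loop ::
  "(bool list \<Rightarrow> bool) \<Rightarrow> nat \<Rightarrow> nat \<Rightarrow> bool list multiset \<Rightarrow> bool list multiset spmf" where
  "us_loop acc t n CM =
     (if size CM \<le> n then
        bind_spmf (coins t) (\<lambda>c. if acc c then us_loop acc t n (add_mset c CM) else us_loop acc t n CM)
      else return_spmf CM)"

text \<open>Exponential mechanism Exp^eps_u(D, R) with sensitivity parameter Delta;
 the utility is -infinity (weight 0) on contexts outside COE_M(D,V)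
 (encoded by the predicate fin D c).\<close>
definition exp_weight ::
  "real \<Rightarrow> real \<Rightarrow> ('r multiset \<Rightarrow> bool list \<Rightarrow> bool) \<Rightarrow> ('r multiset \<Rightarrow> bool list \<Rightarrow> real)
    \<Rightarrow> 'r multiset \<Rightarrow> bool list \<Rightarrow> real" where
  "exp_weight eps Delta fin u D c = (if fin D c then exp (eps * u D c / (2 * Delta)) else 0)"

definition exp_mech ::
  "real \<Rightarrow> real \<Rightarrow> ('r multiset \<Rightarrow> bool list \<Rightarrow> bool) \<Rightarrow> ('r multiset \<Rightarrow> bool list \<Rightarrow> real)
    \<Rightarrow> 'r multiset \<Rightarrow> bool list set \<Rightarrow> bool list spmf" where
  "exp_mech eps Delta fin u D R =
     embed_spmf (\<lambda>c. if c \<in> R then exp_weight eps Delta fin u D c / (\<Sum>r\<in>R. exp_weight eps Delta fin u D r) else 0)"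

definition uniform_sampling ::
  "nat \<Rightarrow> (nat \<Rightarrow> nat) \<Rightarrow> ('r \<Rightarrow> nat \<Rightarrow> nat) \<Rightarrow> ('r multiset \<Rightarrow> 'r \<Rightarrow> bool) \<Rightarrow> 'r
    \<Rightarrow> nat \<Rightarrow> real \<Rightarrow> real \<Rightarrow> ('r multiset \<Rightarrow> bool list \<Rightarrow> real) \<Rightarrow> 'r multiset \<Rightarrow> bool list spmf" where
  "uniform_sampling m d val f V n eps Delta u D =
     bind_spmf (us_loop (\<lambda>c. c \<in> COE m d val f D V) (tlen m d) n {#})
       (\<lambda>CM. exp_mech eps Delta (\<lambda>D' c. c \<in> COE m d val f D' V) u D (set_mset CM))"

end

theory Submission imports Defs begin

text \<open>On f-neighbours D1, D2 the sets COE(D1, V) and COE(D2, V) coincide, so the sampling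
 loop, which only consults this set, produces the same distribution of candidate multisets
 C_M for both datasets. It therefore suffices that the exponential mechanism, run on any
 fixed finite candidate set, is eps1-differentially private: a change of at most Delta in
 the utility changes every weight by a factor of at most exp (eps1 / 2), hence the
 normalising sum by the same factor, and the output probabilities by at most exp eps1.
 This is stronger than the claimed factor exp (2 * eps1).\<close>

lemma spmf_embed_spmf_normalized:
  fixes w :: "'a \<Rightarrow> real"
  assumes "finite R" and "\<And>c. 0 \<le> w c"
  shows "spmf (embed_spmf (\<lambda>c. if c \<in> R then w c / sum w R else 0)) x =
         (if x \<in> R then w x / sum w R else 0)"
proof -
  let ?g = "\<lambda>c. if c \<in> R then w c / sum w R else 0"
  have g_nonneg: "0 \<le> ?g c" for c
    using assms by (simp add: sum_nonneg)
  have "(\<integral>\<^sup>+ c. ennreal (?g c) \<partial>count_space UNIV) = (\<integral>\<^sup>+ c. ennreal (?g c) \<partial>count_space R)"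
    by (subst nn_integral_count_space_indicator)
      (auto intro!: nn_integral_cong split: split_indicator)
  also have "\<dots> = (\<Sum>c\<in>R. ennreal (?g c))"
    using assms(1) by (simp add: nn_integral_count_space_finite)
  also have "\<dots> = ennreal (\<Sum>c\<in>R. ?g c)"
    using g_nonneg by (intro sum_ennreal)
  also have "(\<Sum>c\<in>R. ?g c) = sum w R / sum w R"
    by (subst sum_divide_distrib) (rule sum.cong, auto)
  also have "\<dots> \<le> 1"
    by (cases "sum w R = 0") auto
  finally have "(\<integral>\<^sup>+ c. ennreal (?g c) \<partial>count_space UNIV) \<le> 1"
    by (simp add: ennreal_leI)
  then show ?thesis
    using g_nonneg by (subst spmf_embed_spmf) (auto simp: max_def)
qed

lemma measure_spmf_le_if_spmf_le:
  assumes "\<And>x. spmf p x \<le> K * spmf q x" and "0 \<le> K"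
  shows "measure (measure_spmf p) S \<le> K * measure (measure_spmf q) S"
proof -
  have "emeasure (measure_spmf p) S = (\<integral>\<^sup>+ x. spmf p x \<partial>count_space S)"
    by (simp add: nn_integral_spmf)
  also have "\<dots> \<le> (\<integral>\<^sup>+ x. ennreal K * spmf q x \<partial>count_space S)"
    using assms by (intro nn_integral_mono) (simp add: ennreal_mult'[symmetric] ennreal_leI)
  also have "\<dots> = ennreal K * emeasure (measure_spmf q) S"
    by (simp add: nn_integral_cmult nn_integral_spmf)
  finally show ?thesis
    using assms(2)
    by (simp add: measure_spmf.emeasure_eq_measure ennreal_mult[symmetric] ennreal_le_iff)
qed

lemma spmf_bind_le_if_spmf_le:
  assumes "\<And>y x. spmf (f y) x \<le> K * spmf (g y) x"
  shows "spmf (bind_spmf p f) x \<le> K * spmf (bind_spmf p g) x"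
proof -
  have "integrable (measure_spmf p) (\<lambda>y. spmf (f y) x)"
    by (rule measure_spmf.integrable_const_bound[where B = 1]) (auto simp: pmf_le_1)
  moreover have "integrable (measure_spmf p) (\<lambda>y. K * spmf (g y) x)"
    by (rule measure_spmf.integrable_const_bound[where B = "\<bar>K\<bar>"])
      (auto simp: abs_mult pmf_le_1 intro: mult_left_le)
  ultimately show ?thesis
    unfolding spmf_bind using integral_mono[OF _ _ assms] by simp
qed

lemma normalized_weight_le:
  fixes w1 w2 :: "'a \<Rightarrow> real"
  assumes "finite R" and "x \<in> R" and "0 \<le> a"
    and "\<And>c. 0 \<le> w1 c" and "\<And>c. 0 \<le> w2 c"
    and "\<And>c. c \<in> R \<Longrightarrow> w1 c \<le> a * w2 c" and "\<And>c. c \<in> R \<Longrightarrow> w2 c \<le> a * w1 c"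
  shows "w1 x / sum w1 R \<le> (a * a) * (w2 x / sum w2 R)"
proof (cases "sum w1 R = 0")
  case True
  then show ?thesis
    using assms by (simp add: sum_nonneg)
next
  case False
  then have sum1_pos: "0 < sum w1 R"
    using assms(4) by (simp add: sum_nonneg order_le_neq_trans)
  have sum2_le: "sum w2 R \<le> a * sum w1 R" and sum1_le: "sum w1 R \<le> a * sum w2 R"
    using assms(6,7) by (simp_all add: sum_distrib_left sum_mono)
  then have sum2_pos: "0 < sum w2 R"
    using sum1_pos assms(5) sum_nonneg[of R w2] by (cases "sum w2 R = 0") auto
  have "w1 x / sum w1 R \<le> a * w2 x / sum w1 R"
    using assms(2,6) sum1_pos by (simp add: divide_right_mono)
  also have "\<dots> \<le> a * w2 x * (a / sum w2 R)"
  proof -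
    have "1 / sum w1 R \<le> a / sum w2 R"
      using sum1_pos sum2_pos sum2_le by (simp add: field_simps)
    then have "a * w2 x * (1 / sum w1 R) \<le> a * w2 x * (a / sum w2 R)"
      using assms(3,5) by (intro mult_left_mono) auto
    then show ?thesis
      by simp
  qed
  finally show ?thesis
    by (simp add: field_simps)
qed

lemma exp_weight_le:
  assumes "0 \<le> eps" and "0 < Delta"
    and "fin D1 c \<Longrightarrow> fin D2 c" and "fin D1 c \<Longrightarrow> u D1 c - u D2 c \<le> Delta"
  shows "exp_weight eps Delta fin u D1 c \<le> exp (eps / 2) * exp_weight eps Delta fin u D2 c"
proof (cases "fin D1 c")
  case True
  then have "eps * (u D1 c - u D2 c) \<le> eps * Delta"
    using assms(1,4) by (simp add: mult_left_mono)
  then have "eps * u D1 c / (2 * Delta) \<le> eps / 2 + eps * u D2 c / (2 * Delta)"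
    using assms(2) by (simp add: field_simps)
  then show ?thesis
    using True assms(3) by (simp add: exp_weight_def exp_add[symmetric])
qed (simp add: exp_weight_def)

lemma spmf_exp_mech_le:
  assumes "finite R" and "0 \<le> eps" and "0 < Delta"
    and "\<And>c. fin D1 c \<longleftrightarrow> fin D2 c"
    and "\<And>c. fin D1 c \<Longrightarrow> \<bar>u D1 c - u D2 c\<bar> \<le> Delta"
  shows "spmf (exp_mech eps Delta fin u D1 R) x \<le> exp eps * spmf (exp_mech eps Delta fin u D2 R) x"
proof (cases "x \<in> R")
  case True
  let ?w1 = "exp_weight eps Delta fin u D1" and ?w2 = "exp_weight eps Delta fin u D2"
  have w_nonneg: "0 \<le> exp_weight eps Delta fin u D c" for D c
    by (simp add: exp_weight_def)
  have "?w1 c \<le> exp (eps / 2) * ?w2 c" and "?w2 c \<le> exp (eps / 2) * ?w1 c" for c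
    using assms(2-5) by (auto intro!: exp_weight_le simp: abs_le_iff)
  then have "?w1 x / sum ?w1 R \<le> (exp (eps / 2) * exp (eps / 2)) * (?w2 x / sum ?w2 R)"
    using assms(1) True w_nonneg by (intro normalized_weight_le) auto
  also have "exp (eps / 2) * exp (eps / 2) = exp eps"
    by (simp add: exp_add[symmetric])
  finally show ?thesis
    unfolding exp_mech_def using assms(1) True w_nonneg
    by (simp add: spmf_embed_spmf_normalized)
qed (simp add: exp_mech_def spmf_embed_spmf_normalized assms(1) exp_weight_def)

theorem theorem4:
  fixes m :: nat and d :: "nat \<Rightarrow> nat" and val :: "'r \<Rightarrow> nat \<Rightarrow> nat"
    and f :: "'r multiset \<Rightarrow> 'r \<Rightarrow> bool" and V :: 'r
    and n :: nat and eps1 Delta :: real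
    and u :: "'r multiset \<Rightarrow> bool list \<Rightarrow> real"
  assumes vals: "\<And>x i. i < m \<Longrightarrow> val x i < d i"
    and eps_pos: "eps1 > 0"
    and Delta_pos: "Delta > 0" and Delta_le: "Delta \<le> 1"
    and sens: "\<And>D1 D2 c. neighbors D1 D2 \<Longrightarrow> c \<in> COE m d val f D1 V \<Longrightarrow>
                 c \<in> COE m d val f D2 V \<Longrightarrow> \<bar>u D1 c - u D2 c\<bar> \<le> Delta"
  shows "OCDP (2 * eps1) (\<lambda>D. COE m d val f D V) (uniform_sampling m d val f V n eps1 Delta u)"
  unfolding OCDP_def
proof (intro allI impI)
  fix D1 D2 S
  assume "f_neighbors (\<lambda>D. COE m d val f D V) D1 D2"
  then have nb: "neighbors D1 D2" and same_COE: "COE m d val f D1 V = COE m d val f D2 V"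
    by (auto simp: f_neighbors_def)
  let ?fin = "\<lambda>D c. c \<in> COE m d val f D V"
  have mech_le: "spmf (exp_mech eps1 Delta ?fin u D1 (set_mset CM)) x
      \<le> exp (2 * eps1) * spmf (exp_mech eps1 Delta ?fin u D2 (set_mset CM)) x" for CM x
  proof -
    have "spmf (exp_mech eps1 Delta ?fin u D1 (set_mset CM)) x
        \<le> exp eps1 * spmf (exp_mech eps1 Delta ?fin u D2 (set_mset CM)) x"
      using eps_pos Delta_pos same_COE sens[OF nb] by (intro spmf_exp_mech_le) auto
    also have "\<dots> \<le> exp (2 * eps1) * spmf (exp_mech eps1 Delta ?fin u D2 (set_mset CM)) x"
      using eps_pos by (intro mult_right_mono) auto
    finally show ?thesis .
  qed
  show "measure (measure_spmf (uniform_sampling m d val f V n eps1 Delta u D1)) S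
        \<le> exp (2 * eps1) * measure (measure_spmf (uniform_sampling m d val f V n eps1 Delta u D2)) S"
    unfolding uniform_sampling_def same_COE
    by (intro measure_spmf_le_if_spmf_le spmf_bind_le_if_spmf_le mech_le) simp
qed

end
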